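(* Let $p\ge3$ and let $\mathcal{C}_p$ be the directed cycle with vertex set $\{1,\dots,p\}$ and edges $1\to2,2\to3,\dots,p-1\to p,p\to1$ (no bidirected edges). Then $\tau(\mathcal{C}_p)=2$, and if $n<2$ then $\hat\ell(\mathcal{C}_p\mid S_{0,n})=\infty$ almost surely.
   Context: For a mixed graph $\mathcal{G}=(V,D,B)$ with $V=\{1,\dots,p\}$: $\mathbb{R}^D_{\mathrm{reg}}$ is the set of real $p\times p$ matrices $\Lambda$ with $\lambda_{ij}=0$ whenever $i\to j\notin D$ and $I-\Lambda$ invertible; $PD(B)$ is the set of positive definite $\Omega$ with $\omega_{ij}=0$ for $i\neq j$, $\{i,j\}\notin B$ (for $B=\emptyset$: positive definite diagonal matrices); $PD(\mathcal{G})=\{(I-\Lambda)^{-T}\Omega(I-\Lambda)^{-1}:\Lambda\in\mathbb{R}^D_{\mathrm{reg}},\Omega\in PD(B)\}$. For an i.i.d. sample $X^{(1)},\dots,X^{(n)}$ from an absolutely continuous distribution on $\mathbb{R}^p$, $S_{0,n}=\frac1n\sum_s X^{(s)}(X^{(s)})^T$; $\ell(\Sigma\mid S)=-\log\det\Sigma-\mathrm{trace}(\Sigma^{-1}S)$; $\hat\ell(\mathcal{G}\mid S)=\sup_{\Sigma\in PD(\mathcal{G})}\ell(\Sigma\mid S)$; $\tau(\mathcal{G})=\min\{N\in\mathbb{N}:\hat\ell(\mathcal{G}\mid S_{0,n})<\infty\text{ a.s. for all }n\ge N\}$. *)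

theory Defs
  imports "HOL-Probability.Probability" "Jordan_Normal_Form.Gauss_Jordan_Elimination" "Jordan_Normal_Form.Determinant"
begin

(* Vertices of a mixed graph on p nodes are 0,...,p-1 (paper: 1,...,p, shifted by one).
   D : directed edges, (i,j) \<in> D means i \<rightarrow> j.
   B : bidirected edges, {i,j} \<in> B is encoded as (i,j) \<in> B or (j,i) \<in> B. *)

definition mat_inv :: "real mat \<Rightarrow> real mat" where
  "mat_inv A = the (mat_inverse A)"

definition mat_trace :: "real mat \<Rightarrow> real" where
  "mat_trace A = (\<Sum>i<dim_row A. A $$ (i,i))"

definition pos_def_mat :: "nat \<Rightarrow> real mat \<Rightarrow> bool" where
  "pos_def_mat p \<Omega> \<longleftrightarrow> \<Omega> \<in> carrier_mat p p \<and> transpose_mat \<Omega> = \<Omega> \<and>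
     (\<forall>v \<in> carrier_vec p. v \<noteq> 0\<^sub>v p \<longrightarrow> v \<bullet> (\<Omega> *\<^sub>v v) > 0)"

definition reg_params :: "nat \<Rightarrow> (nat \<times> nat) set \<Rightarrow> real mat set" where
  "reg_params p D = {\<Lambda> \<in> carrier_mat p p.
      (\<forall>i<p. \<forall>j<p. (i,j) \<notin> D \<longrightarrow> \<Lambda> $$ (i,j) = 0) \<and> invertible_mat (1\<^sub>m p - \<Lambda>)}"

definition PD_B :: "nat \<Rightarrow> (nat \<times> nat) set \<Rightarrow> real mat set" where
  "PD_B p B = {\<Omega>. pos_def_mat p \<Omega> \<and>
      (\<forall>i<p. \<forall>j<p. i \<noteq> j \<and> (i,j) \<notin> B \<and> (j,i) \<notin> B \<longrightarrow> \<Omega> $$ (i,j) = 0)}"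

definition PD_G :: "nat \<Rightarrow> (nat \<times> nat) set \<Rightarrow> (nat \<times> nat) set \<Rightarrow> real mat set" where
  "PD_G p D B = {transpose_mat (mat_inv (1\<^sub>m p - \<Lambda>)) * \<Omega> * mat_inv (1\<^sub>m p - \<Lambda>) | \<Lambda> \<Omega>.
      \<Lambda> \<in> reg_params p D \<and> \<Omega> \<in> PD_B p B}"

definition loglik :: "real mat \<Rightarrow> real mat \<Rightarrow> real" where
  "loglik \<Sigma> S = - ln (Determinant.det \<Sigma>) - mat_trace (mat_inv \<Sigma> * S)"

definition max_loglik :: "nat \<Rightarrow> (nat \<times> nat) set \<Rightarrow> (nat \<times> nat) set \<Rightarrow> real mat \<Rightarrow> ereal" where
  "max_loglik p D B S = (SUP \<Sigma> \<in> PD_G p D B. ereal (loglik \<Sigma> S))"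

(* S_{0,n}; the sample is X^(0),...,X^(n-1), each a vector indexed by 0..p-1 *)
definition sample_cov :: "nat \<Rightarrow> nat \<Rightarrow> (nat \<Rightarrow> nat \<Rightarrow> real) \<Rightarrow> real mat" where
  "sample_cov p n X = mat p p (\<lambda>(i,j). (1 / real n) * (\<Sum>s<n. X s i * X s j))"

definition lebesgue_p :: "nat \<Rightarrow> (nat \<Rightarrow> real) measure" where
  "lebesgue_p p = PiM {..<p} (\<lambda>_. lborel)"

definition abs_cont_distr :: "nat \<Rightarrow> (nat \<Rightarrow> real) measure \<Rightarrow> bool" where
  "abs_cont_distr p \<mu> \<longleftrightarrow> prob_space \<mu> \<and> sets \<mu> = sets (lebesgue_p p) \<and>
      absolutely_continuous (lebesgue_p p) \<mu>"

definition iid_sample :: "nat \<Rightarrow> (nat \<Rightarrow> real) measure \<Rightarrow> (nat \<Rightarrow> nat \<Rightarrow> real) measure" where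
  "iid_sample n \<mu> = PiM {..<n} (\<lambda>_. \<mu>)"

definition tau :: "nat \<Rightarrow> (nat \<times> nat) set \<Rightarrow> (nat \<times> nat) set \<Rightarrow> (nat \<Rightarrow> real) measure \<Rightarrow> nat" where
  "tau p D B \<mu> = (LEAST N. \<forall>n\<ge>N.
      AE X in iid_sample n \<mu>. max_loglik p D B (sample_cov p n X) < \<infinity>)"

definition cycle_edges :: "nat \<Rightarrow> (nat \<times> nat) set" where
  "cycle_edges p = {(i, Suc i mod p) | i. i < p}"

end

theory Submission
  imports Defs
begin

text \<open>
  For \<Omega> = diag(\<omega>) the log-likelihood of (I - \<Lambda>)^-T \<Omega> (I - \<Lambda>)^-1 equals
  ln det(I - \<Lambda>)^2 - \<Sum>_j (ln \<omega>_j + Q_j / \<omega>_j), where Q_j is the empirical variance of the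
  residual of the j-th structural equation; on the cycle this residual is X_(i+1) - \<lambda>_i X_i.

  With two observations in general position, Q_(i+1) \<ge> c_i (1 + |\<lambda>_i|)^2 for constants c_i > 0,
  while expanding the determinant gives |det(I - \<Lambda>)| \<le> p! \<Prod>_i (1 + |\<lambda>_i|). After optimising
  each \<omega>_j separately the factors (1 + |\<lambda>_i|)^2 cancel, so the likelihood is bounded.

  With a single observation x (almost surely with nonzero entries), the exact regressions
  \<lambda>_i = x_(i+1) / x_i along the path 0 \<rightarrow> ... \<rightarrow> p-1 give det(I - \<Lambda>) = 1 and Q_j = 0 for all
  j \<noteq> 0, so letting these \<omega>_j tend to 0 drives the likelihood to infinity.
\<close>

lemma invertible_mat_iff_Units:
  fixes A :: "real mat"
  assumes "A \<in> carrier_mat n n"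
  shows "invertible_mat A \<longleftrightarrow> A \<in> Units (ring_mat TYPE(real) n ())"
proof
  assume "invertible_mat A"
  then obtain B where AB: "A * B = 1\<^sub>m n" and BA: "B * A = 1\<^sub>m (dim_row B)"
    using assms unfolding invertible_mat_def inverts_mat_def by auto
  have "B \<in> carrier_mat n n"
    using AB BA assms by (metis carrier_matD(2) carrier_matI index_mult_mat(2,3) index_one_mat(2,3))
  with AB BA show "A \<in> Units (ring_mat TYPE(real) n ())"
    using assms unfolding Units_def ring_mat_def by auto
next
  assume "A \<in> Units (ring_mat TYPE(real) n ())"
  then show "invertible_mat A"
    using assms unfolding Units_def ring_mat_def invertible_mat_def inverts_mat_def by auto
qed

lemma invertible_mat_iff_det_nonzero:
  fixes A :: "real mat"
  assumes "A \<in> carrier_mat n n"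
  shows "invertible_mat A \<longleftrightarrow> Determinant.det A \<noteq> 0"
  using invertible_mat_iff_Units[OF assms] unit_imp_det_non_zero[of A n "()"]
    det_non_zero_imp_unit[OF assms, of "()"]
  by auto

lemma mat_inv_inverse:
  fixes A :: "real mat"
  assumes A: "A \<in> carrier_mat n n" and "invertible_mat A"
  shows "A * mat_inv A = 1\<^sub>m n" "mat_inv A * A = 1\<^sub>m n" "mat_inv A \<in> carrier_mat n n"
proof -
  have "A \<in> Units (ring_mat TYPE(real) n ())" using assms invertible_mat_iff_Units by blast
  then obtain B where "mat_inverse A = Some B"
    using mat_inverse(1)[OF A, of "()"] by (cases "mat_inverse A") auto
  then show "A * mat_inv A = 1\<^sub>m n" "mat_inv A * A = 1\<^sub>m n" "mat_inv A \<in> carrier_mat n n"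
    using mat_inverse(2)[OF A] unfolding mat_inv_def by auto
qed

lemma mult_mat_cancel_left:
  fixes A B X :: "'a :: semiring_1 mat"
  assumes "B * A = 1\<^sub>m n" "A \<in> carrier_mat n n" "B \<in> carrier_mat n n" "X \<in> carrier_mat n m"
  shows "B * (A * X) = X"
proof -
  have "B * (A * X) = (B * A) * X" by (rule assoc_mult_mat[symmetric]) (use assms in auto)
  also have "\<dots> = X" using assms(1,4) by simp
  finally show ?thesis .
qed

lemma mat_inv_eqI:
  fixes A B :: "real mat"
  assumes A: "A \<in> carrier_mat n n" and B: "B \<in> carrier_mat n n"
    and AB: "A * B = 1\<^sub>m n" and BA: "B * A = 1\<^sub>m n"
  shows "mat_inv A = B"
proof -
  have inv: "invertible_mat A"
    unfolding invertible_mat_def inverts_mat_def using A B AB BA by auto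
  note inverse = mat_inv_inverse[OF A inv]
  have "mat_inv A = mat_inv A * (A * B)" using inverse AB by simp
  also have "\<dots> = B" by (rule mult_mat_cancel_left[OF inverse(2) A inverse(3) B])
  finally show ?thesis .
qed

lemma index_mult_mat_sum:
  fixes A B :: "'a :: comm_ring_1 mat"
  assumes "A \<in> carrier_mat n m" "B \<in> carrier_mat m k" "i < n" "j < k"
  shows "(A * B) $$ (i,j) = (\<Sum>l<m. A $$ (i,l) * B $$ (l,j))"
  using assms by (simp add: scalar_prod_def lessThan_atLeast0)

lemma abs_det_le_fact_prod_row_sums:
  fixes A :: "real mat"
  assumes A: "A \<in> carrier_mat n n"
  shows "\<bar>Determinant.det A\<bar> \<le> fact n * (\<Prod>i<n. \<Sum>j<n. \<bar>A $$ (i,j)\<bar>)"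
proof -
  let ?P = "{\<pi>. \<pi> permutes {0..<n}}"
  let ?r = "\<lambda>i. \<Sum>j<n. \<bar>A $$ (i,j)\<bar>"
  have "\<bar>Determinant.det A\<bar> = \<bar>\<Sum>\<pi>\<in>?P. of_int (sign \<pi>) * (\<Prod>i=0..<n. A $$ (i,\<pi> i))\<bar>"
    using A by (simp add: det_def)
  also have "\<dots> \<le> (\<Sum>\<pi>\<in>?P. \<bar>of_int (sign \<pi>) * (\<Prod>i=0..<n. A $$ (i,\<pi> i))\<bar>)"
    by (rule sum_abs)
  also have "\<dots> = (\<Sum>\<pi>\<in>?P. \<Prod>i=0..<n. \<bar>A $$ (i,\<pi> i)\<bar>)"
    by (intro sum.cong refl) (simp add: abs_mult abs_prod sign_def)
  also have "\<dots> \<le> (\<Sum>\<pi>\<in>?P. \<Prod>i=0..<n. ?r i)"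
  proof (intro sum_mono prod_mono conjI)
    fix \<pi> i assume "\<pi> \<in> ?P" and "i \<in> {0..<n}"
    then have "\<pi> i < n" by (simp add: permutes_in_image)
    then show "\<bar>A $$ (i,\<pi> i)\<bar> \<le> ?r i" by (intro member_le_sum) auto
  qed simp
  also have "\<dots> = fact n * (\<Prod>i<n. ?r i)"
    by (simp add: card_permutations atLeast0LessThan)
  finally show ?thesis .
qed

definition diag_of :: "nat \<Rightarrow> (nat \<Rightarrow> real) \<Rightarrow> real mat" where
  "diag_of p d = mat p p (\<lambda>(i,j). if i = j then d i else 0)"

lemma diag_of_carrier [simp]: "diag_of p d \<in> carrier_mat p p"
  by (simp add: diag_of_def)

lemma dim_diag_of [simp]: "dim_row (diag_of p d) = p" "dim_col (diag_of p d) = p"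
  by (simp_all add: diag_of_def)

lemma index_diag_of_mult:
  assumes "B \<in> carrier_mat p m" "i < p" "j < m"
  shows "(diag_of p d * B) $$ (i,j) = d i * B $$ (i,j)"
proof -
  have "(diag_of p d * B) $$ (i,j) = (\<Sum>l<p. diag_of p d $$ (i,l) * B $$ (l,j))"
    by (rule index_mult_mat_sum) (use assms in auto)
  also have "\<dots> = (\<Sum>l<p. if l = i then d i * B $$ (i,j) else 0)"
    by (intro sum.cong) (auto simp: diag_of_def assms)
  finally show ?thesis using assms(2) by simp
qed

lemma diag_of_mult: "diag_of p d * diag_of p e = diag_of p (\<lambda>i. d i * e i)"
proof (rule eq_matI)
  fix i j assume "i < dim_row (diag_of p (\<lambda>i. d i * e i))" "j < dim_col (diag_of p (\<lambda>i. d i * e i))"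
  then show "(diag_of p d * diag_of p e) $$ (i,j) = diag_of p (\<lambda>i. d i * e i) $$ (i,j)"
    using index_diag_of_mult[of "diag_of p e" p p i j d] by (simp add: diag_of_def)
qed (simp_all add: diag_of_def)

lemma det_diag_of: "Determinant.det (diag_of p d) = (\<Prod>i<p. d i)"
proof -
  have "upper_triangular (diag_of p d)" by (simp add: upper_triangular_def diag_of_def)
  then show ?thesis
    by (simp add: det_upper_triangular[of _ p] prod_list_diag_prod atLeast0LessThan diag_of_def)
qed

lemma index_diag_of_mult_vec:
  fixes v :: "real vec"
  assumes "v \<in> carrier_vec p" "i < p"
  shows "(diag_of p d *\<^sub>v v) $ i = d i * v $ i"
proof -
  have "(diag_of p d *\<^sub>v v) $ i = (\<Sum>j\<in>{0..<p}. (if i = j then d i else 0) * v $ j)"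
    using assms by (simp add: diag_of_def scalar_prod_def)
  also have "\<dots> = (\<Sum>j\<in>{0..<p}. if j = i then d i * v $ i else 0)"
    by (rule sum.cong) auto
  finally show ?thesis using assms by simp
qed

lemma PD_B_empty_iff:
  "\<Omega> \<in> PD_B p {} \<longleftrightarrow> (\<exists>d. (\<forall>i<p. 0 < d i) \<and> \<Omega> = diag_of p d)"
proof
  assume \<Omega>: "\<Omega> \<in> PD_B p {}"
  have C: "\<Omega> \<in> carrier_mat p p" using \<Omega> unfolding PD_B_def pos_def_mat_def by auto
  have "0 < \<Omega> $$ (i,i)" if i: "i < p" for i
  proof -
    have "unit_vec p i \<noteq> 0\<^sub>v p" using i
      by (metis index_unit_vec(1) index_zero_vec(1) zero_neq_one)
    then have "0 < unit_vec p i \<bullet> (\<Omega> *\<^sub>v unit_vec p i)"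
      using \<Omega> unfolding PD_B_def pos_def_mat_def by auto
    also have "\<dots> = \<Omega> $$ (i,i)" using C i by simp
    finally show ?thesis .
  qed
  moreover have "\<Omega> = diag_of p (\<lambda>i. \<Omega> $$ (i,i))"
  proof (rule eq_matI)
    fix i j assume "i < dim_row (diag_of p (\<lambda>i. \<Omega> $$ (i,i)))" "j < dim_col (diag_of p (\<lambda>i. \<Omega> $$ (i,i)))"
    then show "\<Omega> $$ (i,j) = diag_of p (\<lambda>i. \<Omega> $$ (i,i)) $$ (i,j)"
      using \<Omega> by (simp add: PD_B_def diag_of_def)
  qed (use C in \<open>auto simp: diag_of_def\<close>)
  ultimately show "\<exists>d. (\<forall>i<p. 0 < d i) \<and> \<Omega> = diag_of p d"
    by (intro exI[of _ "\<lambda>i. \<Omega> $$ (i,i)"]) simp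
next
  assume "\<exists>d. (\<forall>i<p. 0 < d i) \<and> \<Omega> = diag_of p d"
  then obtain d where d: "\<And>i. i < p \<Longrightarrow> 0 < d i" and \<Omega>: "\<Omega> = diag_of p d" by blast
  have "0 < v \<bullet> (\<Omega> *\<^sub>v v)" if v: "v \<in> carrier_vec p" and nz: "v \<noteq> 0\<^sub>v p" for v
  proof -
    obtain k where k: "k < p" "v $ k \<noteq> 0"
    proof (rule ccontr)
      assume "\<not> thesis"
      with that have "v = 0\<^sub>v p" using v by (intro eq_vecI) auto
      with nz show False by simp
    qed
    have "v \<bullet> (\<Omega> *\<^sub>v v) = (\<Sum>i\<in>{0..<p}. v $ i * (d i * v $ i))"
      unfolding scalar_prod_def using v
      by (intro sum.cong) (auto simp: \<Omega> index_diag_of_mult_vec simp del: index_mult_mat_vec)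
    also have "\<dots> = (\<Sum>i\<in>{0..<p}. d i * (v $ i)\<^sup>2)"
      by (simp add: power2_eq_square mult.left_commute)
    also have "\<dots> > 0"
      using k d by (intro sum_pos2[of _ k]) (auto simp: less_imp_le)
    finally show ?thesis .
  qed
  moreover have "transpose_mat \<Omega> = \<Omega>" by (rule eq_matI) (auto simp: \<Omega> diag_of_def)
  moreover have "\<Omega> $$ (i,j) = 0" if "i < p" "j < p" "i \<noteq> j" for i j
    using that by (simp add: \<Omega> diag_of_def)
  moreover have "\<Omega> \<in> carrier_mat p p" by (simp add: \<Omega>)
  ultimately show "\<Omega> \<in> PD_B p {}" unfolding PD_B_def pos_def_mat_def by blast
qed

section \<open>Likelihood of a structural equation model with independent errors\<close>

lemma index_mult_diag_of:
  assumes "B \<in> carrier_mat m p" "i < m" "j < p"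
  shows "(B * diag_of p d) $$ (i,j) = B $$ (i,j) * d j"
proof -
  have "(B * diag_of p d) $$ (i,j) = (\<Sum>l<p. B $$ (i,l) * diag_of p d $$ (l,j))"
    by (rule index_mult_mat_sum) (use assms in auto)
  also have "\<dots> = (\<Sum>l<p. if l = j then B $$ (i,j) * d j else 0)"
    by (intro sum.cong) (auto simp: diag_of_def assms)
  finally show ?thesis using assms(3) by simp
qed

definition sem_cov :: "nat \<Rightarrow> real mat \<Rightarrow> real mat \<Rightarrow> real mat" where
  "sem_cov p \<Lambda> \<Omega> = transpose_mat (mat_inv (1\<^sub>m p - \<Lambda>)) * \<Omega> * mat_inv (1\<^sub>m p - \<Lambda>)"

lemma PD_G_sem_cov:
  "PD_G p D B = {sem_cov p \<Lambda> \<Omega> | \<Lambda> \<Omega>. \<Lambda> \<in> reg_params p D \<and> \<Omega> \<in> PD_B p B}"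
  unfolding PD_G_def sem_cov_def ..

lemma reg_params_carrier:
  assumes "\<Lambda> \<in> reg_params p D"
  shows "\<Lambda> \<in> carrier_mat p p" "1\<^sub>m p - \<Lambda> \<in> carrier_mat p p" "invertible_mat (1\<^sub>m p - \<Lambda>)"
  using assms by (auto simp: reg_params_def)

lemma mat_inv_sem_cov:
  assumes \<Lambda>: "\<Lambda> \<in> reg_params p D" and \<Omega>: "\<Omega> \<in> carrier_mat p p" and W: "W \<in> carrier_mat p p"
    and W\<Omega>: "W * \<Omega> = 1\<^sub>m p" and \<Omega>W: "\<Omega> * W = 1\<^sub>m p"
  shows "mat_inv (sem_cov p \<Lambda> \<Omega>) = (1\<^sub>m p - \<Lambda>) * W * transpose_mat (1\<^sub>m p - \<Lambda>)"
proof (rule mat_inv_eqI)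
  define A where "A = 1\<^sub>m p - \<Lambda>"
  note A = reg_params_carrier(2,3)[OF \<Lambda>, folded A_def]
  note B = mat_inv_inverse[OF A]
  have At: "transpose_mat A \<in> carrier_mat p p" and Bt: "transpose_mat (mat_inv A) \<in> carrier_mat p p"
    using A B by auto
  have BtAt: "transpose_mat (mat_inv A) * transpose_mat A = 1\<^sub>m p"
    using transpose_mult[OF A(1) B(3)] B(1) by simp
  have AtBt: "transpose_mat A * transpose_mat (mat_inv A) = 1\<^sub>m p"
    using transpose_mult[OF B(3) A(1)] B(2) by simp
  show "sem_cov p \<Lambda> \<Omega> \<in> carrier_mat p p" "A * W * transpose_mat A \<in> carrier_mat p p"
    unfolding sem_cov_def A_def[symmetric] using A B \<Omega> W by auto
  have "sem_cov p \<Lambda> \<Omega> * (A * W * transpose_mat A)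
      = transpose_mat (mat_inv A) * (\<Omega> * (mat_inv A * (A * (W * transpose_mat A))))"
    unfolding sem_cov_def A_def[symmetric] using A B \<Omega> W At Bt
    by (simp add: assoc_mult_mat[of _ p p _ p _ p])
  also have "\<dots> = transpose_mat (mat_inv A) * transpose_mat A"
    using mult_mat_cancel_left[OF B(2) A(1) B(3) mult_carrier_mat[OF W At]]
      mult_mat_cancel_left[OF \<Omega>W W \<Omega> At] by simp
  finally show "sem_cov p \<Lambda> \<Omega> * (A * W * transpose_mat A) = 1\<^sub>m p"
    using BtAt by simp
  have "A * W * transpose_mat A * sem_cov p \<Lambda> \<Omega>
      = A * (W * (transpose_mat A * (transpose_mat (mat_inv A) * (\<Omega> * mat_inv A))))"
    unfolding sem_cov_def A_def[symmetric] using A B \<Omega> W At Bt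
    by (simp add: assoc_mult_mat[of _ p p _ p _ p])
  also have "\<dots> = A * mat_inv A"
    using mult_mat_cancel_left[OF AtBt Bt At mult_carrier_mat[OF \<Omega> B(3)]]
      mult_mat_cancel_left[OF W\<Omega> \<Omega> W B(3)] by simp
  finally show "A * W * transpose_mat A * sem_cov p \<Lambda> \<Omega> = 1\<^sub>m p"
    using B by simp
qed

lemma det_sem_cov:
  assumes \<Lambda>: "\<Lambda> \<in> reg_params p D" and \<Omega>: "\<Omega> \<in> carrier_mat p p"
  shows "Determinant.det (sem_cov p \<Lambda> \<Omega>) = Determinant.det \<Omega> / (Determinant.det (1\<^sub>m p - \<Lambda>))\<^sup>2"
proof -
  define A where "A = 1\<^sub>m p - \<Lambda>"
  note A = reg_params_carrier(2,3)[OF \<Lambda>, folded A_def]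
  note B = mat_inv_inverse[OF A]
  have det_inv: "Determinant.det A * Determinant.det (mat_inv A) = 1"
    using det_mult[OF A(1) B(3)] B(1) by simp
  then have "Determinant.det A \<noteq> 0" by auto
  with det_inv have "Determinant.det (mat_inv A) = 1 / Determinant.det A"
    by (simp add: eq_divide_eq mult.commute)
  moreover have "Determinant.det (sem_cov p \<Lambda> \<Omega>)
      = Determinant.det (transpose_mat (mat_inv A) * \<Omega>) * Determinant.det (mat_inv A)"
    unfolding sem_cov_def A_def[symmetric] by (rule det_mult[of _ p]) (use B \<Omega> in auto)
  moreover have "Determinant.det (transpose_mat (mat_inv A) * \<Omega>)
      = Determinant.det (mat_inv A) * Determinant.det \<Omega>"
    using det_mult[of "transpose_mat (mat_inv A)" p \<Omega>] det_transpose[OF B(3)] B(3) \<Omega> by simp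
  ultimately show ?thesis by (simp add: A_def power2_eq_square)
qed

text \<open>The j-th diagonal entry of A^T S A; for A = I - \<Lambda> and a sample covariance S it is the
  empirical variance of the residual of the j-th structural equation.\<close>

definition quad_col :: "nat \<Rightarrow> real mat \<Rightarrow> real mat \<Rightarrow> nat \<Rightarrow> real" where
  "quad_col p S A j = (\<Sum>i<p. \<Sum>k<p. A $$ (k,j) * S $$ (k,i) * A $$ (i,j))"

lemma trace_congruence_diag_of:
  assumes A: "A \<in> carrier_mat p p" and S: "S \<in> carrier_mat p p"
  shows "mat_trace (A * diag_of p e * transpose_mat A * S) = (\<Sum>j<p. e j * quad_col p S A j)"
proof -
  define K where "K = A * diag_of p e * transpose_mat A"
  have K: "K \<in> carrier_mat p p" using A unfolding K_def carrier_mat_def by simp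
  have "K $$ (i,k) = (\<Sum>j<p. (A * diag_of p e) $$ (i,j) * transpose_mat A $$ (j,k))"
    if "i < p" "k < p" for i k
    unfolding K_def by (rule index_mult_mat_sum) (use that A in auto)
  moreover have "(A * diag_of p e) $$ (i,j) = A $$ (i,j) * e j" if "i < p" "j < p" for i j
    by (rule index_mult_diag_of[OF A that])
  ultimately have K_entry: "K $$ (i,k) = (\<Sum>j<p. A $$ (i,j) * e j * A $$ (k,j))"
    if "i < p" "k < p" for i k
    using that A by (simp del: index_mult_mat)
  have "(K * S) $$ (i,i) = (\<Sum>k<p. K $$ (i,k) * S $$ (k,i))" if "i < p" for i
    by (rule index_mult_mat_sum) (use that K S in auto)
  then have "mat_trace (K * S) = (\<Sum>i<p. \<Sum>k<p. (\<Sum>j<p. A $$ (i,j) * e j * A $$ (k,j)) * S $$ (k,i))"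
    unfolding mat_trace_def using K by (simp add: K_entry)
  then have "mat_trace (A * diag_of p e * transpose_mat A * S)
      = (\<Sum>i<p. \<Sum>k<p. (\<Sum>j<p. A $$ (i,j) * e j * A $$ (k,j)) * S $$ (k,i))"
    by (simp add: K_def)
  also have "\<dots> = (\<Sum>i<p. \<Sum>k<p. \<Sum>j<p. e j * (A $$ (k,j) * S $$ (k,i) * A $$ (i,j)))"
    by (intro sum.cong refl) (simp add: sum_distrib_left sum_distrib_right mult_ac)
  also have "\<dots> = (\<Sum>i<p. \<Sum>j<p. \<Sum>k<p. e j * (A $$ (k,j) * S $$ (k,i) * A $$ (i,j)))"
    by (rule sum.cong[OF refl], rule sum.swap)
  also have "\<dots> = (\<Sum>j<p. \<Sum>i<p. \<Sum>k<p. e j * (A $$ (k,j) * S $$ (k,i) * A $$ (i,j)))"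
    by (rule sum.swap)
  also have "\<dots> = (\<Sum>j<p. e j * quad_col p S A j)"
    by (simp add: quad_col_def sum_distrib_left)
  finally show ?thesis .
qed

lemma loglik_sem_cov_diag_of:
  assumes \<Lambda>: "\<Lambda> \<in> reg_params p D" and d: "\<forall>j<p. 0 < d j" and S: "S \<in> carrier_mat p p"
  shows "loglik (sem_cov p \<Lambda> (diag_of p d)) S = ln ((Determinant.det (1\<^sub>m p - \<Lambda>))\<^sup>2)
     - (\<Sum>j<p. ln (d j)) - (\<Sum>j<p. quad_col p S (1\<^sub>m p - \<Lambda>) j / d j)"
proof -
  define A where "A = 1\<^sub>m p - \<Lambda>"
  have A: "A \<in> carrier_mat p p" "Determinant.det A \<noteq> 0"
    using reg_params_carrier[OF \<Lambda>] invertible_mat_iff_det_nonzero by (auto simp: A_def)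
  have inv: "diag_of p (\<lambda>j. 1 / d j) * diag_of p d = 1\<^sub>m p" "diag_of p d * diag_of p (\<lambda>j. 1 / d j) = 1\<^sub>m p"
    unfolding diag_of_mult using d by (auto simp: diag_of_def intro!: eq_matI)
  have det: "Determinant.det (sem_cov p \<Lambda> (diag_of p d)) = (\<Prod>j<p. d j) / (Determinant.det A)\<^sup>2"
    using det_sem_cov[OF \<Lambda> diag_of_carrier] by (simp add: det_diag_of A_def)
  have "0 < (\<Prod>j<p. d j)" using d by (intro prod_pos) auto
  moreover have "0 < (Determinant.det A)\<^sup>2" using A by simp
  ultimately have "ln (Determinant.det (sem_cov p \<Lambda> (diag_of p d)))
      = ln (\<Prod>j<p. d j) - ln ((Determinant.det A)\<^sup>2)"
    unfolding det by (rule ln_divide_pos)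
  also have "ln (\<Prod>j<p. d j) = (\<Sum>j<p. ln (d j))"
    using d by (intro ln_prod) auto
  finally have ln_det: "ln (Determinant.det (sem_cov p \<Lambda> (diag_of p d)))
      = (\<Sum>j<p. ln (d j)) - ln ((Determinant.det A)\<^sup>2)" .
  have "mat_inv (sem_cov p \<Lambda> (diag_of p d)) = A * diag_of p (\<lambda>j. 1 / d j) * transpose_mat A"
    unfolding A_def by (rule mat_inv_sem_cov[OF \<Lambda> diag_of_carrier diag_of_carrier inv])
  then have "mat_trace (mat_inv (sem_cov p \<Lambda> (diag_of p d)) * S) = (\<Sum>j<p. 1 / d j * quad_col p S A j)"
    using trace_congruence_diag_of[OF A(1) S] by simp
  with ln_det show ?thesis unfolding loglik_def A_def by simp
qed

lemma sample_cov_carrier: "sample_cov p n X \<in> carrier_mat p p"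
  by (simp add: sample_cov_def)

lemma quad_col_sample_cov:
  "quad_col p (sample_cov p n X) A j = (\<Sum>s<n. (\<Sum>l<p. A $$ (l,j) * X s l)\<^sup>2) / real n"
proof -
  have "quad_col p (sample_cov p n X) A j
      = (\<Sum>i<p. \<Sum>k<p. \<Sum>s<n. (A $$ (i,j) * X s i) * (A $$ (k,j) * X s k) / real n)"
    unfolding quad_col_def
    by (intro sum.cong refl) (simp add: sample_cov_def sum_distrib_left sum_distrib_right mult_ac)
  also have "\<dots> = (\<Sum>i<p. \<Sum>s<n. \<Sum>k<p. (A $$ (i,j) * X s i) * (A $$ (k,j) * X s k) / real n)"
    by (rule sum.cong[OF refl], rule sum.swap)
  also have "\<dots> = (\<Sum>s<n. \<Sum>i<p. \<Sum>k<p. (A $$ (i,j) * X s i) * (A $$ (k,j) * X s k) / real n)"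
    by (rule sum.swap)
  also have "\<dots> = (\<Sum>s<n. (\<Sum>l<p. A $$ (l,j) * X s l)\<^sup>2) / real n"
    by (simp add: power2_eq_square sum_product sum_divide_distrib)
  finally show ?thesis .
qed

section \<open>The directed cycle\<close>

lemma cycle_edges_iff: "(i,j) \<in> cycle_edges p \<longleftrightarrow> i < p \<and> j = Suc i mod p"
  by (auto simp: cycle_edges_def)

lemma Suc_mod_eq_iff:
  assumes "i < p" "j < p"
  shows "Suc i mod p = Suc j mod p \<longleftrightarrow> i = j"
  using assms by (auto simp: mod_if split: if_splits)

lemma Suc_mod_neq:
  assumes "2 \<le> p" "i < p"
  shows "Suc i mod p \<noteq> i"
  using assms by (auto simp: mod_if)

lemma sum_reindex_Suc_mod: "(\<Sum>j<p. f j) = (\<Sum>i<p. f (Suc i mod p))"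
proof -
  have inj: "inj_on (\<lambda>i. Suc i mod p) {..<p}"
    by (auto simp: inj_on_def Suc_mod_eq_iff)
  then have "(\<lambda>i. Suc i mod p) ` {..<p} = {..<p}"
    by (intro endo_inj_surj) auto
  then show ?thesis
    using sum.reindex[OF inj, of f] by simp
qed

context
  fixes p :: nat and \<Lambda> :: "real mat"
  assumes \<Lambda>: "\<Lambda> \<in> reg_params p (cycle_edges p)"
begin

lemma cycle_param_eq_0:
  assumes "i < p" "j < p" "j \<noteq> Suc i mod p"
  shows "\<Lambda> $$ (i,j) = 0"
  using \<Lambda> assms by (auto simp: reg_params_def cycle_edges_iff)

lemma row_abs_sum_cycle_le:
  assumes i: "i < p"
  shows "(\<Sum>j<p. \<bar>(1\<^sub>m p - \<Lambda>) $$ (i,j)\<bar>) \<le> 1 + \<bar>\<Lambda> $$ (i, Suc i mod p)\<bar>"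
proof -
  have "(\<Sum>j<p. \<bar>(1\<^sub>m p - \<Lambda>) $$ (i,j)\<bar>)
      \<le> (\<Sum>j<p. (if j = i then 1 else 0) + (if j = Suc i mod p then \<bar>\<Lambda> $$ (i, Suc i mod p)\<bar> else 0))"
  proof (rule sum_mono)
    fix j assume j: "j \<in> {..<p}"
    then have "(1\<^sub>m p - \<Lambda>) $$ (i,j) = (if i = j then 1 else 0) - \<Lambda> $$ (i,j)"
      using i reg_params_carrier(1)[OF \<Lambda>] by auto
    then show "\<bar>(1\<^sub>m p - \<Lambda>) $$ (i,j)\<bar>
        \<le> (if j = i then 1 else 0) + (if j = Suc i mod p then \<bar>\<Lambda> $$ (i, Suc i mod p)\<bar> else 0)"
      using cycle_param_eq_0[OF i, of j] j by auto
  qed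
  also have "\<dots> = 1 + \<bar>\<Lambda> $$ (i, Suc i mod p)\<bar>"
    using i by (simp add: sum.distrib)
  finally show ?thesis .
qed

lemma ln_det_sq_cycle_le:
  "ln ((Determinant.det (1\<^sub>m p - \<Lambda>))\<^sup>2)
    \<le> 2 * ln (fact p) + 2 * (\<Sum>i<p. ln (1 + \<bar>\<Lambda> $$ (i, Suc i mod p)\<bar>))"
proof -
  define A where "A = 1\<^sub>m p - \<Lambda>"
  have A: "A \<in> carrier_mat p p" "Determinant.det A \<noteq> 0"
    using reg_params_carrier[OF \<Lambda>] invertible_mat_iff_det_nonzero by (auto simp: A_def)
  have "\<bar>Determinant.det A\<bar> \<le> fact p * (\<Prod>i<p. \<Sum>j<p. \<bar>A $$ (i,j)\<bar>)"
    by (rule abs_det_le_fact_prod_row_sums[OF A(1)])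
  also have "\<dots> \<le> fact p * (\<Prod>i<p. 1 + \<bar>\<Lambda> $$ (i, Suc i mod p)\<bar>)"
    using row_abs_sum_cycle_le by (intro mult_left_mono prod_mono) (auto simp: A_def sum_nonneg)
  finally have "ln \<bar>Determinant.det A\<bar> \<le> ln (fact p * (\<Prod>i<p. 1 + \<bar>\<Lambda> $$ (i, Suc i mod p)\<bar>))"
    using A(2) by simp
  also have "\<dots> = ln (fact p) + ln (\<Prod>i<p. 1 + \<bar>\<Lambda> $$ (i, Suc i mod p)\<bar>)"
    by (intro ln_mult_pos prod_pos) (auto simp: add_pos_nonneg)
  also have "ln (\<Prod>i<p. 1 + \<bar>\<Lambda> $$ (i, Suc i mod p)\<bar>) = (\<Sum>i<p. ln (1 + \<bar>\<Lambda> $$ (i, Suc i mod p)\<bar>))"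
    by (intro ln_prod) (auto simp: add_nonneg_eq_0_iff)
  finally have "ln \<bar>Determinant.det A\<bar> \<le> ln (fact p) + (\<Sum>i<p. ln (1 + \<bar>\<Lambda> $$ (i, Suc i mod p)\<bar>))" .
  moreover have "ln ((Determinant.det A)\<^sup>2) = 2 * ln \<bar>Determinant.det A\<bar>"
    using A(2) ln_realpow[of "\<bar>Determinant.det A\<bar>" 2] by simp
  ultimately show ?thesis by (simp add: A_def)
qed

lemma column_cycle_apply:
  assumes p: "2 \<le> p" and i: "i < p"
  shows "(\<Sum>l<p. (1\<^sub>m p - \<Lambda>) $$ (l, Suc i mod p) * x l) = x (Suc i mod p) - \<Lambda> $$ (i, Suc i mod p) * x i"
proof -
  define k where "k = Suc i mod p"
  have k: "k < p" "k \<noteq> i" using Suc_mod_neq[OF p i] i by (auto simp: k_def)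
  have off: "\<Lambda> $$ (l, k) = 0" if "l < p" "l \<noteq> i" for l
    using cycle_param_eq_0[OF that(1) k(1)] Suc_mod_eq_iff[OF that(1) i] that(2) by (auto simp: k_def)
  have "(1\<^sub>m p - \<Lambda>) $$ (l, k) * x l
      = (if l = k then x k else 0) - (if l = i then \<Lambda> $$ (i, k) * x i else 0)"
    if l: "l < p" for l
  proof -
    have "(1\<^sub>m p - \<Lambda>) $$ (l, k) = (if l = k then 1 else 0) - \<Lambda> $$ (l, k)"
      using l k reg_params_carrier(1)[OF \<Lambda>] by auto
    then show ?thesis using off[OF l] off[OF k(1)] k(2) by auto
  qed
  then have "(\<Sum>l<p. (1\<^sub>m p - \<Lambda>) $$ (l, k) * x l)
      = (\<Sum>l<p. (if l = k then x k else 0) - (if l = i then \<Lambda> $$ (i, k) * x i else 0))"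
    by (intro sum.cong) auto
  also have "\<dots> = x k - \<Lambda> $$ (i, k) * x i"
    using i k by (simp add: sum_subtractf)
  finally show ?thesis unfolding k_def .
qed

end

section \<open>Two observations: bounded likelihood\<close>

lemma cauchy_schwarz_2d: "((x::real) * a + y * b)\<^sup>2 \<le> (x\<^sup>2 + y\<^sup>2) * (a\<^sup>2 + b\<^sup>2)"
proof -
  have "(x\<^sup>2 + y\<^sup>2) * (a\<^sup>2 + b\<^sup>2) - (x * a + y * b)\<^sup>2 = (x * b - y * a)\<^sup>2"
    by (simp add: power2_eq_square algebra_simps)
  then show ?thesis by (metis diff_ge_0_iff_ge zero_le_power2)
qed

lemma two_point_residual_bound:
  fixes u v :: "nat \<Rightarrow> real"
  assumes n: "2 \<le> n"
  shows "(u 0 * v 1 - u 1 * v 0)\<^sup>2 * (1 + \<bar>l\<bar>)\<^sup>2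
    \<le> 2 * ((u 0)\<^sup>2 + (u 1)\<^sup>2 + (v 0)\<^sup>2 + (v 1)\<^sup>2) * (\<Sum>s<n. (u s - l * v s)\<^sup>2)"
proof -
  define a b \<delta> F where "a = u 0 - l * v 0" and "b = u 1 - l * v 1"
    and "\<delta> = u 0 * v 1 - u 1 * v 0" and "F = (u 0)\<^sup>2 + (u 1)\<^sup>2 + (v 0)\<^sup>2 + (v 1)\<^sup>2"
  \<comment> \<open>Both \<delta> and l * \<delta> are linear combinations of the two residuals a and b.\<close>
  have "\<delta> = v 1 * a + (- v 0) * b" by (simp add: a_def b_def \<delta>_def algebra_simps)
  then have \<delta>_le: "\<delta>\<^sup>2 \<le> ((v 1)\<^sup>2 + (v 0)\<^sup>2) * (a\<^sup>2 + b\<^sup>2)"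
    using cauchy_schwarz_2d[of "v 1" a "- v 0" b] by simp
  have "l * \<delta> = u 1 * a + (- u 0) * b" by (simp add: a_def b_def \<delta>_def algebra_simps)
  then have "(l * \<delta>)\<^sup>2 \<le> ((u 1)\<^sup>2 + (u 0)\<^sup>2) * (a\<^sup>2 + b\<^sup>2)"
    using cauchy_schwarz_2d[of "u 1" a "- u 0" b] by simp
  with \<delta>_le have \<delta>_l_le: "(1 + l\<^sup>2) * \<delta>\<^sup>2 \<le> F * (a\<^sup>2 + b\<^sup>2)"
    unfolding F_def by (simp add: power_mult_distrib algebra_simps)
  have "\<delta>\<^sup>2 * (1 + \<bar>l\<bar>)\<^sup>2 \<le> \<delta>\<^sup>2 * (2 * (1 + l\<^sup>2))"
    using cauchy_schwarz_2d[of 1 1 1 "\<bar>l\<bar>"] by (intro mult_left_mono) simp_all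
  also have "\<dots> = 2 * ((1 + l\<^sup>2) * \<delta>\<^sup>2)" by simp
  also have "\<dots> \<le> 2 * (F * (a\<^sup>2 + b\<^sup>2))" using \<delta>_l_le by simp
  also have "\<dots> \<le> 2 * (F * (\<Sum>s<n. (u s - l * v s)\<^sup>2))"
  proof -
    have "a\<^sup>2 + b\<^sup>2 = (\<Sum>s\<in>{0,1}. (u s - l * v s)\<^sup>2)" by (simp add: a_def b_def)
    also have "\<dots> \<le> (\<Sum>s<n. (u s - l * v s)\<^sup>2)" using n by (intro sum_mono2) auto
    finally show ?thesis by (simp add: F_def mult_left_mono)
  qed
  finally show ?thesis unfolding \<delta>_def F_def by (simp only: mult.assoc)
qed

lemma neg_ln_sub_div_le:
  fixes w R Q :: real
  assumes "0 < w" "0 < R" "R \<le> Q"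
  shows "- ln w - Q / w \<le> - ln R - 1"
proof -
  have "ln (R / w) \<le> R / w - 1" using assms by (intro ln_le_minus_one) auto
  moreover have "R / w \<le> Q / w" using assms by (simp add: divide_right_mono)
  ultimately show ?thesis using assms by (simp add: ln_divide_pos)
qed

lemma quad_col_cycle_sample_cov:
  assumes \<Lambda>: "\<Lambda> \<in> reg_params p (cycle_edges p)" and p: "2 \<le> p" and i: "i < p"
  shows "quad_col p (sample_cov p n X) (1\<^sub>m p - \<Lambda>) (Suc i mod p)
    = (\<Sum>s<n. (X s (Suc i mod p) - \<Lambda> $$ (i, Suc i mod p) * X s i)\<^sup>2) / real n"
  using column_cycle_apply[OF \<Lambda> p i] by (simp add: quad_col_sample_cov)

lemma quad_col_cycle_two_point_bound:
  assumes \<Lambda>: "\<Lambda> \<in> reg_params p (cycle_edges p)" and p: "2 \<le> p" and n: "2 \<le> n" and i: "i < p"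
  defines "k \<equiv> Suc i mod p"
  shows "(X 0 k * X 1 i - X 1 k * X 0 i)\<^sup>2 * (1 + \<bar>\<Lambda> $$ (i, k)\<bar>)\<^sup>2
    \<le> 2 * real n * ((X 0 k)\<^sup>2 + (X 1 k)\<^sup>2 + (X 0 i)\<^sup>2 + (X 1 i)\<^sup>2)
      * quad_col p (sample_cov p n X) (1\<^sub>m p - \<Lambda>) k"
proof -
  let ?F = "(X 0 k)\<^sup>2 + (X 1 k)\<^sup>2 + (X 0 i)\<^sup>2 + (X 1 i)\<^sup>2"
  let ?R = "\<Sum>s<n. (X s k - \<Lambda> $$ (i, k) * X s i)\<^sup>2"
  have "(X 0 k * X 1 i - X 1 k * X 0 i)\<^sup>2 * (1 + \<bar>\<Lambda> $$ (i, k)\<bar>)\<^sup>2 \<le> 2 * ?F * ?R"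
    using two_point_residual_bound[OF n, of "\<lambda>s. X s k" "\<lambda>s. X s i" "\<Lambda> $$ (i, k)"] by simp
  also have "?R = real n * quad_col p (sample_cov p n X) (1\<^sub>m p - \<Lambda>) k"
    using quad_col_cycle_sample_cov[OF \<Lambda> p i] n unfolding k_def by simp
  finally show ?thesis by (simp add: mult_ac)
qed

lemma loglik_cycle_le:
  assumes \<Lambda>: "\<Lambda> \<in> reg_params p (cycle_edges p)" and d: "\<forall>j<p. 0 < d j" and S: "S \<in> carrier_mat p p"
    and c: "\<forall>i<p. 0 < c i"
    and residual: "\<forall>i<p. c i * (1 + \<bar>\<Lambda> $$ (i, Suc i mod p)\<bar>)\<^sup>2
      \<le> quad_col p S (1\<^sub>m p - \<Lambda>) (Suc i mod p)"
  shows "loglik (sem_cov p \<Lambda> (diag_of p d)) S \<le> 2 * ln (fact p) - (\<Sum>i<p. ln (c i)) - real p"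
proof -
  define Q where "Q j = quad_col p S (1\<^sub>m p - \<Lambda>) j" for j
  define \<beta> where "\<beta> i = \<bar>\<Lambda> $$ (i, Suc i mod p)\<bar>" for i
  have ln_lower: "ln (c i * (1 + \<beta> i)\<^sup>2) = ln (c i) + 2 * ln (1 + \<beta> i)" if "i < p" for i
  proof -
    have "0 < 1 + \<beta> i" by (simp add: \<beta>_def add_pos_nonneg)
    with c that show ?thesis by (simp add: ln_mult_pos ln_realpow)
  qed
  have "- (\<Sum>j<p. ln (d j)) - (\<Sum>j<p. Q j / d j) = (\<Sum>j<p. - ln (d j) - Q j / d j)"
    by (simp add: sum_subtractf sum_negf)
  \<comment> \<open>Pair the equation of each node Suc i mod p with the edge from its only parent i.\<close>
  also have "\<dots> = (\<Sum>i<p. - ln (d (Suc i mod p)) - Q (Suc i mod p) / d (Suc i mod p))"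
    by (rule sum_reindex_Suc_mod)
  also have "\<dots> \<le> (\<Sum>i<p. - ln (c i) - 2 * ln (1 + \<beta> i) - 1)"
  proof (rule sum_mono)
    fix i assume i: "i \<in> {..<p}"
    then have "- ln (d (Suc i mod p)) - Q (Suc i mod p) / d (Suc i mod p) \<le> - ln (c i * (1 + \<beta> i)\<^sup>2) - 1"
      using d c residual by (intro neg_ln_sub_div_le) (auto simp: Q_def \<beta>_def)
    with i show "- ln (d (Suc i mod p)) - Q (Suc i mod p) / d (Suc i mod p) \<le> - ln (c i) - 2 * ln (1 + \<beta> i) - 1"
      using ln_lower by simp
  qed
  also have "\<dots> = - (\<Sum>i<p. ln (c i)) - 2 * (\<Sum>i<p. ln (1 + \<beta> i)) - real p"
    by (simp add: sum_subtractf sum_negf sum_distrib_left)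
  finally have "- (\<Sum>j<p. ln (d j)) - (\<Sum>j<p. Q j / d j)
      \<le> - (\<Sum>i<p. ln (c i)) - 2 * (\<Sum>i<p. ln (1 + \<beta> i)) - real p" .
  moreover have "loglik (sem_cov p \<Lambda> (diag_of p d)) S
      = ln ((Determinant.det (1\<^sub>m p - \<Lambda>))\<^sup>2) - (\<Sum>j<p. ln (d j)) - (\<Sum>j<p. Q j / d j)"
    unfolding Q_def by (rule loglik_sem_cov_diag_of[OF \<Lambda> d S])
  moreover have "ln ((Determinant.det (1\<^sub>m p - \<Lambda>))\<^sup>2) \<le> 2 * ln (fact p) + 2 * (\<Sum>i<p. ln (1 + \<beta> i))"
    unfolding \<beta>_def by (rule ln_det_sq_cycle_le[OF \<Lambda>])
  ultimately show ?thesis by linarith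
qed

theorem max_loglik_cycle_finite:
  assumes p: "2 \<le> p" and n: "2 \<le> n"
    and nondeg: "\<forall>i<p. X 0 (Suc i mod p) * X 1 i - X 1 (Suc i mod p) * X 0 i \<noteq> 0"
  shows "max_loglik p (cycle_edges p) {} (sample_cov p n X) < \<infinity>"
proof -
  define F where "F i = (X 0 (Suc i mod p))\<^sup>2 + (X 1 (Suc i mod p))\<^sup>2 + (X 0 i)\<^sup>2 + (X 1 i)\<^sup>2" for i
  define c where
    "c i = (X 0 (Suc i mod p) * X 1 i - X 1 (Suc i mod p) * X 0 i)\<^sup>2 / (2 * real n * F i)" for i
  have F_pos: "0 < F i" if "i < p" for i
  proof -
    have "X 0 (Suc i mod p) \<noteq> 0 \<or> X 1 (Suc i mod p) \<noteq> 0" using nondeg that by auto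
    then have "0 < (X 0 (Suc i mod p))\<^sup>2 + (X 1 (Suc i mod p))\<^sup>2"
      by (simp add: sum_power2_gt_zero_iff)
    then show ?thesis
      unfolding F_def using zero_le_power2[of "X 0 i"] zero_le_power2[of "X 1 i"] by linarith
  qed
  have c_pos: "\<forall>i<p. 0 < c i"
    unfolding c_def using nondeg F_pos n by (auto intro!: divide_pos_pos)
  have "loglik \<Sigma> (sample_cov p n X) \<le> 2 * ln (fact p) - (\<Sum>i<p. ln (c i)) - real p"
    if \<Sigma>: "\<Sigma> \<in> PD_G p (cycle_edges p) {}" for \<Sigma>
  proof -
    obtain \<Lambda> \<Omega> where \<Lambda>: "\<Lambda> \<in> reg_params p (cycle_edges p)" and \<Omega>: "\<Omega> \<in> PD_B p {}"
      and \<Sigma>_eq: "\<Sigma> = sem_cov p \<Lambda> \<Omega>"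
      using \<Sigma> unfolding PD_G_sem_cov by blast
    obtain d where d: "\<forall>j<p. 0 < d j" and "\<Omega> = diag_of p d"
      using \<Omega> unfolding PD_B_empty_iff by blast
    moreover have "\<forall>i<p. c i * (1 + \<bar>\<Lambda> $$ (i, Suc i mod p)\<bar>)\<^sup>2
        \<le> quad_col p (sample_cov p n X) (1\<^sub>m p - \<Lambda>) (Suc i mod p)"
    proof (intro allI impI)
      fix i assume i: "i < p"
      have "0 < 2 * real n * F i" using F_pos[OF i] n by simp
      then show "c i * (1 + \<bar>\<Lambda> $$ (i, Suc i mod p)\<bar>)\<^sup>2
          \<le> quad_col p (sample_cov p n X) (1\<^sub>m p - \<Lambda>) (Suc i mod p)"
        using quad_col_cycle_two_point_bound[OF \<Lambda> p n i, of X]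
        by (simp add: c_def F_def pos_divide_le_eq mult_ac)
    qed
    ultimately show ?thesis
      unfolding \<Sigma>_eq using loglik_cycle_le[OF \<Lambda> _ sample_cov_carrier c_pos] by simp
  qed
  then have "max_loglik p (cycle_edges p) {} (sample_cov p n X)
      \<le> ereal (2 * ln (fact p) - (\<Sum>i<p. ln (c i)) - real p)"
    unfolding max_loglik_def by (intro SUP_least) simp
  then show ?thesis by (rule le_less_trans) simp
qed

section \<open>Fewer than two observations: unbounded likelihood\<close>

lemma max_loglik_infinite_if_columns_vanish:
  assumes \<Lambda>: "\<Lambda> \<in> reg_params p D" and S: "S \<in> carrier_mat p p" and p: "2 \<le> p" and j0: "j0 < p"
    and vanish: "\<And>j. j < p \<Longrightarrow> j \<noteq> j0 \<Longrightarrow> quad_col p S (1\<^sub>m p - \<Lambda>) j = 0"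
  shows "max_loglik p D {} S = \<infinity>"
proof -
  define L where "L = ln ((Determinant.det (1\<^sub>m p - \<Lambda>))\<^sup>2)"
  define Q where "Q = quad_col p S (1\<^sub>m p - \<Lambda>) j0"
  define d where "d t j = (if j = j0 then 1 else exp (- t))" for t :: real and j
  \<comment> \<open>Shrinking every error variance except the one at j0 costs nothing in the trace term.\<close>
  have loglik_d: "loglik (sem_cov p \<Lambda> (diag_of p (d t))) S = L + real (p - 1) * t - Q" for t
  proof -
    have "(\<Sum>j<p. ln (d t j)) = ln (d t j0) + (\<Sum>j\<in>{..<p} - {j0}. ln (d t j))"
      using j0 by (intro sum.remove) auto
    also have "\<dots> = (\<Sum>j\<in>{..<p} - {j0}. - t)" by (simp add: d_def)
    also have "\<dots> = - real (p - 1) * t" using j0 by (simp add: card_Diff_singleton of_nat_diff algebra_simps)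
    finally have ln_d: "(\<Sum>j<p. ln (d t j)) = - real (p - 1) * t" .
    have "(\<Sum>j<p. quad_col p S (1\<^sub>m p - \<Lambda>) j / d t j)
        = Q / d t j0 + (\<Sum>j\<in>{..<p} - {j0}. quad_col p S (1\<^sub>m p - \<Lambda>) j / d t j)"
      using j0 by (simp add: Q_def sum.remove)
    also have "\<dots> = Q" using vanish by (simp add: d_def)
    finally have "(\<Sum>j<p. quad_col p S (1\<^sub>m p - \<Lambda>) j / d t j) = Q" .
    with ln_d show ?thesis
      using loglik_sem_cov_diag_of[OF \<Lambda> _ S, of "d t"] by (simp add: d_def L_def)
  qed
  have "\<exists>\<Sigma>\<in>PD_G p D {}. ereal (real N) \<le> ereal (loglik \<Sigma> S)" for N :: nat
  proof
    let ?t = "real N + \<bar>L\<bar> + \<bar>Q\<bar>"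
    have "diag_of p (d ?t) \<in> PD_B p {}"
      unfolding PD_B_empty_iff by (rule exI[of _ "d ?t"]) (simp add: d_def)
    then show "sem_cov p \<Lambda> (diag_of p (d ?t)) \<in> PD_G p D {}"
      unfolding PD_G_sem_cov using \<Lambda> by blast
    have "?t \<le> real (p - 1) * ?t" using p by (intro mult_le_cancel_right1[THEN iffD2]) auto
    then show "ereal (real N) \<le> ereal (loglik (sem_cov p \<Lambda> (diag_of p (d ?t))) S)"
      unfolding loglik_d by simp
  qed
  then show ?thesis unfolding max_loglik_def by (rule SUP_PInfty)
qed

text \<open>Regress each x_(i+1) on x_i along the path 0 \<rightarrow> ... \<rightarrow> p-1, i.e. the cycle without its
  closing edge; for the observation x this fits every structural equation but the one at 0 exactly.\<close>

definition path_regression :: "nat \<Rightarrow> (nat \<Rightarrow> real) \<Rightarrow> real mat" where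
  "path_regression p x = mat p p (\<lambda>(i,j). if Suc i = j then x j / x i else 0)"

lemma path_regression_reg_params: "path_regression p x \<in> reg_params p (cycle_edges p)"
proof -
  define A where "A = 1\<^sub>m p - path_regression p x"
  have A: "A \<in> carrier_mat p p"
    unfolding A_def by (intro minus_carrier_mat) (simp add: path_regression_def)
  have "upper_triangular A" by (auto simp: upper_triangular_def A_def path_regression_def)
  then have "Determinant.det A = (\<Prod>i = 0..<p. A $$ (i,i))"
    using A by (simp add: det_upper_triangular prod_list_diag_prod)
  also have "\<dots> = 1" by (simp add: A_def path_regression_def)
  finally have "invertible_mat A" using invertible_mat_iff_det_nonzero[OF A] by simp
  moreover have "path_regression p x $$ (i,j) = 0" if "i < p" "j < p" "(i,j) \<notin> cycle_edges p" for i j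
    using that by (auto simp: path_regression_def cycle_edges_iff)
  ultimately show ?thesis by (auto simp: reg_params_def A_def path_regression_def)
qed

lemma path_regression_column:
  assumes x: "\<forall>i<p. x i \<noteq> 0" and j: "0 < j" "j < p"
  shows "(\<Sum>l<p. (1\<^sub>m p - path_regression p x) $$ (l,j) * x l) = 0"
proof -
  have "(1\<^sub>m p - path_regression p x) $$ (l,j) * x l
      = (if l = j then x j else 0) - (if l = j - 1 then x j else 0)" if "l < p" for l
    using that j x by (auto simp: path_regression_def)
  then show ?thesis using j by (simp add: sum_subtractf)
qed

theorem max_loglik_cycle_infinite:
  assumes p: "2 \<le> p" and n: "n \<le> 1" and nonzero: "n = 1 \<Longrightarrow> \<forall>i<p. X 0 i \<noteq> 0"
  shows "max_loglik p (cycle_edges p) {} (sample_cov p n X) = \<infinity>"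
proof (rule max_loglik_infinite_if_columns_vanish[OF path_regression_reg_params sample_cov_carrier p])
  fix j assume "j < p" "j \<noteq> 0"
  then show "quad_col p (sample_cov p n X) (1\<^sub>m p - path_regression p (X 0)) j = 0"
    using n nonzero path_regression_column[of p "X 0" j]
    by (cases n) (auto simp: quad_col_sample_cov)
qed (use p in auto)

section \<open>Genericity of absolutely continuous samples\<close>

lemma null_sets_PiM_section:
  fixes M :: "'i \<Rightarrow> 'a measure"
  assumes sf: "\<And>j. sigma_finite_measure (M j)" and I: "finite I" "i \<in> I"
    and A: "A \<in> sets (PiM I M)"
    and sections: "AE x in PiM (I - {i}) M. {t \<in> space (M i). x(i := t) \<in> A} \<in> null_sets (M i)"
  shows "A \<in> null_sets (PiM I M)"
proof -
  have ps: "product_sigma_finite M" unfolding product_sigma_finite_def using sf by auto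
  have insert_I: "insert i (I - {i}) = I" using I by auto
  have "emeasure (PiM I M) A = (\<integral>\<^sup>+x. indicator A x \<partial>PiM I M)" using A by simp
  also have "\<dots> = (\<integral>\<^sup>+x. \<integral>\<^sup>+t. indicator A (x(i := t)) \<partial>M i \<partial>PiM (I - {i}) M)"
  proof -
    have "integral\<^sup>N (PiM (insert i (I - {i})) M) (indicator A) =
        (\<integral>\<^sup>+x. \<integral>\<^sup>+t. indicator A (x(i := t)) \<partial>M i \<partial>PiM (I - {i}) M)"
      by (rule product_sigma_finite.product_nn_integral_insert[OF ps]) (use I A insert_I in auto)
    then show ?thesis unfolding insert_I .
  qed
  also have "\<dots> = (\<integral>\<^sup>+x. 0 \<partial>PiM (I - {i}) M)"
  proof (rule nn_integral_cong_AE)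
    show "AE x in PiM (I - {i}) M. (\<integral>\<^sup>+t. indicator A (x(i := t)) \<partial>M i) = 0"
      using sections
    proof (rule eventually_mono)
      fix x assume N: "{t \<in> space (M i). x(i := t) \<in> A} \<in> null_sets (M i)"
      have "(\<integral>\<^sup>+t. indicator A (x(i := t)) \<partial>M i)
          = (\<integral>\<^sup>+t. indicator {t \<in> space (M i). x(i := t) \<in> A} t \<partial>M i)"
        by (rule nn_integral_cong) (auto simp: indicator_def)
      also have "\<dots> = emeasure (M i) {t \<in> space (M i). x(i := t) \<in> A}"
        using N by (simp add: null_setsD2)
      also have "\<dots> = 0" using N by (rule null_setsD1)
      finally show "(\<integral>\<^sup>+t. indicator A (x(i := t)) \<partial>M i) = 0" .
    qed
  qed
  finally show ?thesis using A by (intro null_setsI) simp_all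
qed

lemma lebesgue_p_hyperplane_null:
  assumes ab: "a < p" "b < p" "a \<noteq> b" and c: "c \<noteq> 0"
  shows "{y \<in> space (lebesgue_p p). c * y a = e * y b} \<in> null_sets (lebesgue_p p)"
  unfolding lebesgue_p_def
proof (rule null_sets_PiM_section[where i = a])
  let ?L = "PiM {..<p} (\<lambda>_. lborel :: real measure)"
  have [measurable]: "(\<lambda>y. y a) \<in> borel_measurable ?L" "(\<lambda>y. y b) \<in> borel_measurable ?L"
    using measurable_component_singleton[of _ "{..<p}" "\<lambda>_. lborel"] ab by simp_all
  show "{y \<in> space ?L. c * y a = e * y b} \<in> sets ?L" by measurable
  show "AE x in PiM ({..<p} - {a}) (\<lambda>_. lborel).
      {t \<in> space lborel. x(a := t) \<in> {y \<in> space ?L. c * y a = e * y b}} \<in> null_sets lborel"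
  proof (rule AE_I2)
    fix x assume "x \<in> space (PiM ({..<p} - {a}) (\<lambda>_. lborel :: real measure))"
    then have slice: "{t \<in> space lborel. x(a := t) \<in> {y \<in> space ?L. c * y a = e * y b}} = {e * x b / c}"
      using ab c by (auto simp: space_PiM PiE_iff extensional_def field_simps)
    show "{t \<in> space lborel. x(a := t) \<in> {y \<in> space ?L. c * y a = e * y b}} \<in> null_sets lborel"
      unfolding slice by (rule null_setsI) auto
  qed
qed (use ab sigma_finite_lborel in auto)

context
  fixes p :: nat and \<mu> :: "(nat \<Rightarrow> real) measure"
  assumes \<mu>: "abs_cont_distr p \<mu>"
begin

lemma abs_cont_distr_hyperplane_null:
  assumes "a < p" "b < p" "a \<noteq> b" "c \<noteq> 0"
  shows "{y \<in> space \<mu>. c * y a = e * y b} \<in> null_sets \<mu>"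
proof -
  have sets: "sets \<mu> = sets (lebesgue_p p)" and ac: "absolutely_continuous (lebesgue_p p) \<mu>"
    using \<mu> unfolding abs_cont_distr_def by auto
  show ?thesis
    using lebesgue_p_hyperplane_null[OF assms, of e] ac sets_eq_imp_space_eq[OF sets]
    unfolding absolutely_continuous_def by auto
qed

lemma abs_cont_distr_coord_measurable:
  assumes "a < p" "s \<in> I"
  shows "(\<lambda>X. X s a) \<in> borel_measurable (PiM I (\<lambda>_. \<mu>))"
proof -
  have "sets \<mu> = sets (lebesgue_p p)" using \<mu> unfolding abs_cont_distr_def by auto
  moreover have "(\<lambda>y. y a) \<in> borel_measurable (lebesgue_p p)"
    unfolding lebesgue_p_def using measurable_component_singleton[of a "{..<p}" "\<lambda>_. lborel"] assms by simp
  ultimately have "(\<lambda>y. y a) \<in> borel_measurable \<mu>"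
    using measurable_cong_sets by blast
  from measurable_compose[OF measurable_component_singleton[OF assms(2)] this]
  show ?thesis by simp
qed

lemma abs_cont_distr_sigma_finite: "sigma_finite_measure \<mu>"
  using \<mu> unfolding abs_cont_distr_def by (auto intro: prob_space_imp_sigma_finite)

lemma AE_PiM_coord_nonzero:
  assumes p: "2 \<le> p" and I: "finite I" "s \<in> I"
  shows "AE X in PiM I (\<lambda>_. \<mu>). \<forall>a<p. X s a \<noteq> 0"
proof -
  have coord_null: "{X \<in> space (PiM I (\<lambda>_. \<mu>)). X s a = 0} \<in> null_sets (PiM I (\<lambda>_. \<mu>))"
    if a: "a < p" for a
  proof (rule null_sets_PiM_section[OF abs_cont_distr_sigma_finite I])
    have [measurable]: "(\<lambda>X. X s a) \<in> borel_measurable (PiM I (\<lambda>_. \<mu>))"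
      using abs_cont_distr_coord_measurable[OF a I(2)] .
    show "{X \<in> space (PiM I (\<lambda>_. \<mu>)). X s a = 0} \<in> sets (PiM I (\<lambda>_. \<mu>))" by measurable
    define b where "b = (if a = 0 then 1 else (0::nat))"
    have b: "b < p" "a \<noteq> b" using p by (auto simp: b_def)
    show "AE x in PiM (I - {s}) (\<lambda>_. \<mu>).
        {t \<in> space \<mu>. x(s := t) \<in> {X \<in> space (PiM I (\<lambda>_. \<mu>)). X s a = 0}} \<in> null_sets \<mu>"
    proof (rule AE_I2)
      fix x assume "x \<in> space (PiM (I - {s}) (\<lambda>_. \<mu>))"
      then have "{t \<in> space \<mu>. x(s := t) \<in> {X \<in> space (PiM I (\<lambda>_. \<mu>)). X s a = 0}}
          = {t \<in> space \<mu>. 1 * t a = 0 * t b}"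
        using I by (auto simp: space_PiM PiE_iff extensional_def)
      then show "{t \<in> space \<mu>. x(s := t) \<in> {X \<in> space (PiM I (\<lambda>_. \<mu>)). X s a = 0}} \<in> null_sets \<mu>"
        using abs_cont_distr_hyperplane_null[OF a b, of 1 0] by simp
    qed
  qed
  have "AE X in PiM I (\<lambda>_. \<mu>). \<forall>a\<in>{..<p}. X s a \<noteq> 0"
  proof (rule AE_finite_allI)
    fix a assume "a \<in> {..<p}"
    then show "AE X in PiM I (\<lambda>_. \<mu>). X s a \<noteq> 0" by (intro AE_I'[OF coord_null]) auto
  qed simp
  then show ?thesis by (rule eventually_mono) simp
qed

lemma AE_PiM_two_sample_det_nonzero:
  fixes n :: nat
  assumes p: "2 \<le> p" and n: "2 \<le> n"
  shows "AE X in PiM {..<n} (\<lambda>_. \<mu>). \<forall>i<p. X 0 (Suc i mod p) * X 1 i - X 1 (Suc i mod p) * X 0 i \<noteq> 0"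
proof -
  let ?M = "PiM {..<n} (\<lambda>_. \<mu>)"
  have pair_ae: "AE X in ?M. X 0 k * X 1 i - X 1 k * X 0 i \<noteq> 0" if ik: "i < p" "k < p" "i \<noteq> k" for i k
  proof -
    define E where "E = {X \<in> space ?M. X 0 k * X 1 i - X 1 k * X 0 i = 0}"
    have [measurable]: "(\<lambda>X. X 0 i) \<in> borel_measurable ?M" "(\<lambda>X. X 1 i) \<in> borel_measurable ?M"
        "(\<lambda>X. X 0 k) \<in> borel_measurable ?M" "(\<lambda>X. X 1 k) \<in> borel_measurable ?M"
      using n ik by (auto intro!: abs_cont_distr_coord_measurable)
    \<comment> \<open>Given a first sample with nonzero entries, the second one must lie on a hyperplane.\<close>
    have "E \<in> null_sets ?M" unfolding E_def
    proof (rule null_sets_PiM_section[OF abs_cont_distr_sigma_finite, where i = 1])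
      show "{X \<in> space ?M. X 0 k * X 1 i - X 1 k * X 0 i = 0} \<in> sets ?M" by measurable
      have "AE x in PiM ({..<n} - {1}) (\<lambda>_. \<mu>). \<forall>a<p. x 0 a \<noteq> 0"
        using n by (intro AE_PiM_coord_nonzero p) auto
      then show "AE x in PiM ({..<n} - {1}) (\<lambda>_. \<mu>).
          {t \<in> space \<mu>. x(1 := t) \<in> {X \<in> space ?M. X 0 k * X 1 i - X 1 k * X 0 i = 0}}
            \<in> null_sets \<mu>"
        using AE_space
      proof eventually_elim
        case (elim x)
        have "{t \<in> space \<mu>. x(1 := t) \<in> {X \<in> space ?M. X 0 k * X 1 i - X 1 k * X 0 i = 0}}
            = {t \<in> space \<mu>. x 0 k * t i = x 0 i * t k}"
          using elim n by (auto simp: space_PiM PiE_iff extensional_def algebra_simps)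
        then show ?case using abs_cont_distr_hyperplane_null[OF ik] elim(1) ik(2) by simp
      qed
    qed (use n in auto)
    then show ?thesis by (rule AE_I') (auto simp: E_def)
  qed
  have "AE X in ?M. \<forall>i\<in>{..<p}. X 0 (Suc i mod p) * X 1 i - X 1 (Suc i mod p) * X 0 i \<noteq> 0"
  proof (intro AE_finite_allI)
    fix i assume "i \<in> {..<p}"
    moreover have "Suc i mod p < p" using p by simp
    ultimately show "AE X in ?M. X 0 (Suc i mod p) * X 1 i - X 1 (Suc i mod p) * X 0 i \<noteq> 0"
      using pair_ae[of i "Suc i mod p"] Suc_mod_neq[OF p, of i] by auto
  qed simp
  then show ?thesis by (rule eventually_mono) simp
qed

end

lemma prob_space_iid_sample: "abs_cont_distr p \<mu> \<Longrightarrow> prob_space (iid_sample n \<mu>)"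
  unfolding iid_sample_def abs_cont_distr_def by (intro prob_space_PiM) auto

lemma AE_max_loglik_cycle_infinite:
  assumes \<mu>: "abs_cont_distr p \<mu>" and p: "2 \<le> p" and n: "n < 2"
  shows "AE X in iid_sample n \<mu>. max_loglik p (cycle_edges p) {} (sample_cov p n X) = \<infinity>"
proof (cases "n = 0")
  case True
  then show ?thesis using max_loglik_cycle_infinite[OF p] by (intro AE_I2) simp
next
  case False
  with n have n: "n = 1" by simp
  have "AE X in iid_sample n \<mu>. \<forall>i<p. X 0 i \<noteq> 0"
    unfolding iid_sample_def using n by (intro AE_PiM_coord_nonzero[OF \<mu> p]) auto
  then show ?thesis by (rule eventually_mono) (use max_loglik_cycle_infinite[OF p] n in simp)
qed

lemma AE_max_loglik_cycle_finite:
  assumes \<mu>: "abs_cont_distr p \<mu>" and p: "2 \<le> p" and n: "2 \<le> n"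
  shows "AE X in iid_sample n \<mu>. max_loglik p (cycle_edges p) {} (sample_cov p n X) < \<infinity>"
  using AE_PiM_two_sample_det_nonzero[OF \<mu> p n] unfolding iid_sample_def
  by (rule eventually_mono) (use max_loglik_cycle_finite[OF p n] in simp)

lemma tau_eqI:
  assumes "\<forall>n\<ge>Suc N. AE X in iid_sample n \<mu>. max_loglik p D B (sample_cov p n X) < \<infinity>"
    and "\<not> (AE X in iid_sample N \<mu>. max_loglik p D B (sample_cov p N X) < \<infinity>)"
  shows "tau p D B \<mu> = Suc N"
  unfolding tau_def
proof (rule Least_equality)
  fix M assume M: "\<forall>n\<ge>M. AE X in iid_sample n \<mu>. max_loglik p D B (sample_cov p n X) < \<infinity>"
  show "Suc N \<le> M"
  proof (rule ccontr)
    assume "\<not> Suc N \<le> M"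
    with M[rule_format, of N] assms(2) show False by simp
  qed
qed (use assms(1) in simp)

theorem mainTheorem9:
  fixes p :: nat and \<mu> :: "(nat \<Rightarrow> real) measure"
  assumes "p \<ge> 3" and "abs_cont_distr p \<mu>"
  shows "tau p (cycle_edges p) {} \<mu> = 2 \<and>
    (\<forall>n<2. AE X in iid_sample n \<mu>. max_loglik p (cycle_edges p) {} (sample_cov p n X) = \<infinity>)"
proof -
  have p: "2 \<le> p" using assms(1) by simp
  note infinite = AE_max_loglik_cycle_infinite[OF assms(2) p]
  have "\<not> (AE X in iid_sample 1 \<mu>. max_loglik p (cycle_edges p) {} (sample_cov p 1 X) < \<infinity>)"
  proof
    assume "AE X in iid_sample 1 \<mu>. max_loglik p (cycle_edges p) {} (sample_cov p 1 X) < \<infinity>"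
    with infinite[of 1] have "AE X in iid_sample 1 \<mu>. False" by (auto elim: AE_mp)
    then show False using prob_space.AE_False[OF prob_space_iid_sample[OF assms(2)]] by simp
  qed
  then have "tau p (cycle_edges p) {} \<mu> = Suc 1"
    using AE_max_loglik_cycle_finite[OF assms(2) p] by (intro tau_eqI) simp_all
  with infinite show ?thesis by simp
qed

end
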